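(* Let $A$ be a generic real $6\times6$ skew-Hamiltonian matrix, let $p,q,r$ be smooth functions on $\mathbb R^6$, and define for $\varepsilon\in\mathbb R$ $$\Pi(x)=(1-\varepsilon^2p(x))J-\varepsilon^2q(x)A^{\rm T}J-\varepsilon^2r(x)(A^{\rm T})^2J.$$ Then $\Pi$ is a Poisson tensor for all $\varepsilon$ if and only if $\nabla q=C_1\nabla r$ and $\nabla p=C_2\nabla r$, where $C_1=A-aI$, $C_2=A^2-aA+bI$, $a=\tfrac12\operatorname{tr}A$, $b=\tfrac18(\operatorname{tr}A)^2-\tfrac14\operatorname{tr}(A^2)$.
   Context: $J=\begin{pmatrix}0&I_3\\-I_3&0\end{pmatrix}$; a real $6\times6$ matrix $A$ is skew-Hamiltonian if $A^{\rm T}J=JA$. Genericity: the characteristic polynomial of $A$ (a square of a cubic) has three pairwise distinct roots, each a double eigenvalue. A (skew-symmetric) matrix-valued function $\Pi$ is a Poisson tensor if the bracket $\{F,G\}=(\nabla F)^{\rm T}\Pi\nabla G$ satisfies the Jacobi identity, i.e. $\{x_i,\{x_j,x_k\}\}+\{x_j,\{x_k,x_i\}\}+\{x_k,\{x_i,x_j\}\}=0$ for all $i,j,k$. *)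

theory Defs
  imports "HOL-Analysis.Analysis"
begin

text \<open>Vectors in R^6 are \<open>real^6\<close>; 6x6 real matrices are \<open>real^6^6\<close>.
  Index type 6 is a ring (integers mod 6) with elements 0,...,5.\<close>

definition Jmat :: "real^6^6" where
  "Jmat = (\<chi> i j. if j = i + 3 then (if i \<in> {0,1,2} then 1 else -1) else 0)"

definition skew_hamiltonian :: "real^6^6 \<Rightarrow> bool" where
  "skew_hamiltonian A \<longleftrightarrow> transpose A ** Jmat = Jmat ** A"

definition charpoly_eval :: "real^6^6 \<Rightarrow> complex \<Rightarrow> complex" where
  "charpoly_eval A t = det ((\<chi> i j. (if i = j then t else 0) - complex_of_real (A $ i $ j)) :: complex^6^6)"

definition generic_sh :: "real^6^6 \<Rightarrow> bool" where
  "generic_sh A \<longleftrightarrow> (\<exists>l1 l2 l3. l1 \<noteq> l2 \<and> l1 \<noteq> l3 \<and> l2 \<noteq> l3 \<and>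
      (\<forall>t. charpoly_eval A t = ((t - l1) * (t - l2) * (t - l3))^2))"

definition pdiff :: "(real^'n \<Rightarrow> real) \<Rightarrow> 'n \<Rightarrow> real^'n \<Rightarrow> real" where
  "pdiff f l = (\<lambda>x. frechet_derivative f (at x) (axis l 1))"

definition grad :: "(real^'n \<Rightarrow> real) \<Rightarrow> real^'n \<Rightarrow> real^'n" where
  "grad f x = (\<chi> l. pdiff f l x)"

definition smooth :: "(real^'n \<Rightarrow> real) \<Rightarrow> bool" where
  "smooth f \<longleftrightarrow> (\<forall>ls :: 'n list. foldr (\<lambda>l g. pdiff g l) ls f differentiable_on UNIV)"

text \<open>Poisson tensor: skew-symmetric and the bracket
  {F,G} = (grad F)^T Pi (grad G) satisfies Jacobi on coordinate functions;
  {x_i, G} = sum_l Pi_il d_l G and {x_j,x_k} = Pi_jk.\<close>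
definition coord_bracket :: "(real^'n \<Rightarrow> real^'n^'n) \<Rightarrow> 'n \<Rightarrow> 'n \<Rightarrow> 'n \<Rightarrow> real^'n \<Rightarrow> real" where
  "coord_bracket P i j k x = (\<Sum>l\<in>UNIV. P x $ i $ l * pdiff (\<lambda>y. P y $ j $ k) l x)"

definition poisson_tensor :: "(real^'n \<Rightarrow> real^'n^'n) \<Rightarrow> bool" where
  "poisson_tensor P \<longleftrightarrow> (\<forall>x. transpose (P x) = - P x) \<and>
     (\<forall>x i j k. coord_bracket P i j k x + coord_bracket P j k i x + coord_bracket P k i j x = 0)"

definition Pi_eps :: "real^6^6 \<Rightarrow> (real^6 \<Rightarrow> real) \<Rightarrow> (real^6 \<Rightarrow> real) \<Rightarrow> (real^6 \<Rightarrow> real)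
    \<Rightarrow> real \<Rightarrow> real^6 \<Rightarrow> real^6^6" where
  "Pi_eps A p q r \<epsilon> x = (1 - \<epsilon>^2 * p x) *\<^sub>R Jmat - (\<epsilon>^2 * q x) *\<^sub>R (transpose A ** Jmat)
      - (\<epsilon>^2 * r x) *\<^sub>R (transpose A ** transpose A ** Jmat)"

end

theory Submission
  imports Defs
begin

text \<open>For skew-Hamiltonian \<open>A\<close> the matrices \<open>J\<close>, \<open>JA\<close>, \<open>JA\<^sup>2\<close> are skew-symmetric, and the
  Jacobiator of \<open>\<Pi>\<^sub>\<epsilon>\<close> at \<open>x\<close> is \<open>-\<epsilon>\<^sup>2 \<Phi>(u\<^sub>p, u\<^sub>q, u\<^sub>r)\<close>, where
  \<open>\<Phi>(u, v, w) = Ju \<and> J + Jv \<and> JA + Jw \<and> JA\<^sup>2\<close> and \<open>u\<^sub>f = (I - \<epsilon>\<^sup>2 Q) \<nabla>f\<close>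
  with \<open>Q = p + qA + rA\<^sup>2\<close>. An entrywise computation shows \<open>\<Phi>(C\<^sub>2 w, C\<^sub>1 w, w) = 0\<close>;
  as \<open>C\<^sub>1\<close>, \<open>C\<^sub>2\<close> and \<open>Q\<close> are polynomials in \<open>A\<close> they commute, which proves sufficiency.
  Conversely, vanishing for all \<open>\<epsilon>\<close> forces \<open>\<Phi>(\<nabla>p, \<nabla>q, \<nabla>r) = 0\<close>, i.e.
  \<open>\<Phi>(u, v, 0) = 0\<close> for \<open>u = \<nabla>p - C\<^sub>2\<nabla>r\<close>, \<open>v = \<nabla>q - C\<^sub>1\<nabla>r\<close>. Contracting with \<open>J\<close> and
  \<open>AJ\<close> and eliminating \<open>u\<close> gives \<open>N(A) v = 0\<close> for \<open>N(t) = 3t\<^sup>2 - 2at + 4b - a\<^sup>2\<close>.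
  Now \<open>A\<close> is annihilated by the cubic \<open>t\<^sup>3 - at\<^sup>2 + bt - c\<close> whose square is its characteristic
  polynomial, and the resultant of \<open>N\<close> and this cubic is its discriminant, which genericity makes
  nonzero; hence \<open>v = 0\<close> and then \<open>u = 0\<close>.\<close>

lemma uminus_matrix_vector_mult: "(- A) *v v = - (A *v v)"
  for A :: "'a::ring_1^'n^'m"
  by (simp add: matrix_vector_mult_def vec_eq_iff sum_negf)

lemma matrix_vector_mult_uminus: "A *v (- v) = - (A *v v)"
  for A :: "'a::ring_1^'n^'m"
  by (simp add: matrix_vector_mult_def vec_eq_iff sum_negf)

lemma uminus_matrix_mult: "(- A) ** B = - (A ** B)"
  for A :: "'a::ring_1^'n^'m"
  by (simp add: matrix_matrix_mult_def vec_eq_iff sum_negf)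

lemma matrix_mult_uminus: "A ** (- B) = - (A ** B)"
  for A :: "'a::ring_1^'n^'m"
  by (simp add: matrix_matrix_mult_def vec_eq_iff sum_negf)

lemma transpose_add: "transpose (X + Y) = transpose X + transpose Y"
  by (simp add: vec_eq_iff transpose_def)

lemma map_matrix_of_real_mult:
  "map_matrix of_real (X ** Y) = (map_matrix of_real X ** map_matrix of_real Y :: 'a::real_algebra_1^'n^'m)"
  for X :: "real^'k^'m"
  by (simp add: vec_eq_iff matrix_matrix_mult_def of_real_sum)

lemma of_real_matrix_vector_mult_smult:
  "map_matrix of_real X *v (l *s y) = l *s (map_matrix of_real X *v y)"
  for X :: "real^'n^'n" and y :: "complex^'n"
  by (simp add: vec_eq_iff matrix_vector_mult_def sum_distrib_left mult_ac)

lemma of_real_matrix_vector_mult_cubic: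
  "map_matrix of_real (a *\<^sub>R (A ** A) - b *\<^sub>R A + c *\<^sub>R mat 1) *v y
     = (of_real a :: complex) *s (map_matrix of_real (A ** A) *v y) - of_real b *s (map_matrix of_real A *v y)
       + of_real c *s y"
  for A :: "real^'n^'n" and y :: "complex^'n"
proof -
  have "(\<Sum>j\<in>UNIV. of_real c * (y $ j * complex_of_real (mat 1 $ i $ j))) = of_real c * y $ i" for i
    by (simp add: mat_def if_distrib[of complex_of_real] if_distrib[of "\<lambda>x. _ * x"] cong: if_cong)
  then show ?thesis
    by (simp add: vec_eq_iff matrix_vector_mult_def sum.distrib sum_subtractf sum_distrib_left algebra_simps)
qed

lemma exhaust_6:
  fixes x :: 6
  shows "x = 0 \<or> x = 1 \<or> x = 2 \<or> x = 3 \<or> x = 4 \<or> x = 5"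
proof (induct x)
  case (of_int z)
  then have "z = 0 \<or> z = 1 \<or> z = 2 \<or> z = 3 \<or> z = 4 \<or> z = 5"
    by fastforce
  then show ?case
    by auto
qed

lemma all_6: "(\<forall>i::6. P i) \<longleftrightarrow> P 0 \<and> P 1 \<and> P 2 \<and> P 3 \<and> P 4 \<and> P 5"
  by (metis exhaust_6)

lemma sum_UNIV_6: "sum f (UNIV::6 set) = f 0 + f 1 + f 2 + f 3 + f 4 + f 5"
proof -
  have UNIV_6: "(UNIV::6 set) = {0,1,2,3,4,5}"
    using exhaust_6 by auto
  then show ?thesis
    unfolding UNIV_6 by (simp add: ac_simps)
qed

lemma all_increasing_6:
  "(\<forall>i j k :: 6. i < j \<longrightarrow> j < k \<longrightarrow> P i j k) \<longleftrightarrow>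
    P 0 1 2 \<and> P 0 1 3 \<and> P 0 1 4 \<and> P 0 1 5 \<and> P 0 2 3 \<and>
    P 0 2 4 \<and> P 0 2 5 \<and> P 0 3 4 \<and> P 0 3 5 \<and> P 0 4 5 \<and>
    P 1 2 3 \<and> P 1 2 4 \<and> P 1 2 5 \<and> P 1 3 4 \<and> P 1 3 5 \<and>
    P 1 4 5 \<and> P 2 3 4 \<and> P 2 3 5 \<and> P 2 4 5 \<and> P 3 4 5"
  unfolding all_6 by (simp add: less_bit0_def bit0.Rep_numeral bit0.Rep_0 bit0.Rep_1)

lemma alternating_eq_0:
  fixes f :: "'a::linorder \<Rightarrow> 'a \<Rightarrow> 'a \<Rightarrow> real"
  assumes cycle: "\<And>i j k. f i j k = f j k i"
    and swap: "\<And>i j k. f i k j = - f i j k"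
    and increasing: "\<And>i j k. i < j \<Longrightarrow> j < k \<Longrightarrow> f i j k = 0"
  shows "f i j k = 0"
  using increasing[of i j k] increasing[of i k j] increasing[of j i k] increasing[of j k i]
    increasing[of k i j] increasing[of k j i] swap[of i j k] swap[of j i k] swap[of k i j]
    swap[of i j j] swap[of j k k] swap[of k i i] cycle[of i j k] cycle[of j k i]
  by (smt (verit) linorder_neqE)

lemma plus_3_eq_minus_3: "(i::6) + 3 = i - 3"
  using exhaust_6[of i] by auto

lemma Jmat_nth: "Jmat $ i $ j = (if j = i + 3 then (if i \<in> {0,1,2} then 1 else -1) else 0)"
  by (simp add: Jmat_def)

text \<open>Rows \<open>3..5\<close> are written with \<open>i - 3\<close> rather than \<open>i + 3\<close>: for concrete indices this
  keeps the numerals in \<open>0..5\<close>, which the simplifier can compare, instead of \<open>6, 7, 8\<close>.\<close>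
lemma Jmat_mult_vector_nth: "(Jmat *v v) $ i = (if i \<in> {0,1,2} then v $ (i + 3) else - v $ (i - 3))"
  unfolding matrix_vector_mult_def Jmat_def
  by (simp add: if_distrib[of "\<lambda>x. x * _"] cong: if_cong) (metis plus_3_eq_minus_3)

lemma Jmat_mult_nth: "(Jmat ** X) $ i $ j = (if i \<in> {0,1,2} then X $ (i + 3) $ j else - X $ (i - 3) $ j)"
  unfolding matrix_matrix_mult_def Jmat_def
  by (simp add: if_distrib[of "\<lambda>x. x * _"] cong: if_cong) (metis plus_3_eq_minus_3)

lemma mult_Jmat_nth: "(X ** Jmat) $ i $ j = (if j \<in> {0,1,2} then - X $ i $ (j + 3) else X $ i $ (j - 3))"
  using exhaust_6[of j] by (auto simp: matrix_matrix_mult_def sum_UNIV_6 Jmat_nth)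

lemma Jmat_mult_Jmat: "Jmat ** Jmat = - mat 1"
  unfolding vec_eq_iff all_6 by (simp add: Jmat_mult_nth Jmat_nth mat_def)

lemma Jmat_mult_Jmat_vector: "Jmat *v (Jmat *v v) = - v"
  by (simp add: matrix_vector_mul_assoc Jmat_mult_Jmat uminus_matrix_vector_mult)

lemma transpose_Jmat: "transpose Jmat = - Jmat"
  unfolding vec_eq_iff all_6 by (simp add: transpose_def Jmat_nth)

lemma Jmat_mult_vector_eq_0_iff: "Jmat *v v = 0 \<longleftrightarrow> v = 0"
proof
  assume "Jmat *v v = 0"
  then have "(Jmat ** Jmat) *v v = 0"
    by (metis matrix_vector_mul_assoc matrix_vector_mult_0_right)
  then show "v = 0"
    by (simp add: Jmat_mult_Jmat uminus_matrix_vector_mult)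
qed simp

section \<open>Skew-Hamiltonian matrices\<close>

text \<open>\<open>A = [[E, F], [G, E\<^sup>T]]\<close> with \<open>F\<close>, \<open>G\<close> skew-symmetric: these rules express every entry
  through the block \<open>E\<close> and the entries \<open>A$0$4, A$0$5, A$1$5\<close> of \<open>F\<close> and \<open>A$3$1, A$3$2, A$4$2\<close>
  of \<open>G\<close>, the 15 free parameters of \<open>A\<close>.\<close>
lemma skew_hamiltonian_nth:
  assumes "skew_hamiltonian A"
  shows "A $ 3 $ 3 = A $ 0 $ 0" "A $ 3 $ 4 = A $ 1 $ 0" "A $ 3 $ 5 = A $ 2 $ 0"
    "A $ 4 $ 3 = A $ 0 $ 1" "A $ 4 $ 4 = A $ 1 $ 1" "A $ 4 $ 5 = A $ 2 $ 1"
    "A $ 5 $ 3 = A $ 0 $ 2" "A $ 5 $ 4 = A $ 1 $ 2" "A $ 5 $ 5 = A $ 2 $ 2"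
    "A $ 0 $ 3 = 0" "A $ 1 $ 4 = 0" "A $ 2 $ 5 = 0" "A $ 3 $ 0 = 0" "A $ 4 $ 1 = 0" "A $ 5 $ 2 = 0"
    "A $ 1 $ 3 = - A $ 0 $ 4" "A $ 2 $ 3 = - A $ 0 $ 5" "A $ 2 $ 4 = - A $ 1 $ 5"
    "A $ 4 $ 0 = - A $ 3 $ 1" "A $ 5 $ 0 = - A $ 3 $ 2" "A $ 5 $ 1 = - A $ 4 $ 2"
proof -
  have sh: "(\<Sum>k\<in>UNIV. A $ k $ i * Jmat $ k $ j) = (\<Sum>k\<in>UNIV. Jmat $ i $ k * A $ k $ j)" for i j
    using assms unfolding skew_hamiltonian_def vec_eq_iff matrix_matrix_mult_def transpose_def by simp
  show "A $ 3 $ 3 = A $ 0 $ 0" "A $ 3 $ 4 = A $ 1 $ 0" "A $ 3 $ 5 = A $ 2 $ 0"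
    "A $ 4 $ 3 = A $ 0 $ 1" "A $ 4 $ 4 = A $ 1 $ 1" "A $ 4 $ 5 = A $ 2 $ 1"
    "A $ 5 $ 3 = A $ 0 $ 2" "A $ 5 $ 4 = A $ 1 $ 2" "A $ 5 $ 5 = A $ 2 $ 2"
    "A $ 0 $ 3 = 0" "A $ 1 $ 4 = 0" "A $ 2 $ 5 = 0" "A $ 3 $ 0 = 0" "A $ 4 $ 1 = 0" "A $ 5 $ 2 = 0"
    "A $ 1 $ 3 = - A $ 0 $ 4" "A $ 2 $ 3 = - A $ 0 $ 5" "A $ 2 $ 4 = - A $ 1 $ 5"
    "A $ 4 $ 0 = - A $ 3 $ 1" "A $ 5 $ 0 = - A $ 3 $ 2" "A $ 5 $ 1 = - A $ 4 $ 2"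
    using sh[of 0 3] sh[of 0 4] sh[of 0 5] sh[of 1 3] sh[of 1 4] sh[of 1 5] sh[of 2 3]
      sh[of 2 4] sh[of 2 5] sh[of 3 3] sh[of 4 4] sh[of 5 5] sh[of 0 0] sh[of 1 1]
      sh[of 2 2] sh[of 3 4] sh[of 3 5] sh[of 4 5] sh[of 0 1] sh[of 0 2] sh[of 1 2]
    by (simp_all add: sum_UNIV_6 Jmat_nth)
qed

lemma skew_hamiltonian_iff_skew: "skew_hamiltonian A \<longleftrightarrow> transpose (Jmat ** A) = - (Jmat ** A)"
  by (simp add: skew_hamiltonian_def matrix_transpose_mul transpose_Jmat matrix_mult_uminus)

lemma skew_hamiltonian_transpose_square:
  assumes "skew_hamiltonian A"
  shows "transpose A ** transpose A ** Jmat = Jmat ** A ** A"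
proof -
  have "transpose A ** transpose A ** Jmat = transpose A ** (transpose A ** Jmat)"
    by (simp add: matrix_mul_assoc)
  also have "\<dots> = (transpose A ** Jmat) ** A"
    using assms by (simp add: skew_hamiltonian_def matrix_mul_assoc)
  finally show ?thesis
    using assms by (simp add: skew_hamiltonian_def)
qed

lemma skew_hamiltonian_skew_square:
  assumes "skew_hamiltonian A"
  shows "transpose (Jmat ** A ** A) = - (Jmat ** A ** A)"
  using skew_hamiltonian_transpose_square[OF assms]
  by (simp add: matrix_transpose_mul transpose_Jmat matrix_mult_uminus matrix_mul_assoc)

lemma skew_hamiltonian_skew_mult_Jmat:
  assumes "skew_hamiltonian A"
  shows "transpose (A ** Jmat) = - (A ** Jmat)"
proof -
  have "Jmat ** transpose A = Jmat ** (transpose A ** Jmat) ** (- Jmat)"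
    by (simp add: matrix_mult_uminus uminus_matrix_mult Jmat_mult_Jmat flip: matrix_mul_assoc)
  also have "\<dots> = A ** Jmat"
    using assms
    by (simp add: skew_hamiltonian_def matrix_mult_uminus uminus_matrix_mult Jmat_mult_Jmat matrix_mul_assoc)
  finally show ?thesis
    by (simp add: matrix_transpose_mul transpose_Jmat uminus_matrix_mult)
qed

section \<open>The cubic annihilating a skew-Hamiltonian matrix\<close>

text \<open>By Newton's identities for the half traces \<open>tr A\<^sup>k / 2\<close>, \<open>sh_a\<close> and \<open>sh_b\<close> are the first two
  elementary symmetric functions of the three double eigenvalues.\<close>
definition sh_a :: "real^'n^'n \<Rightarrow> real" where
  "sh_a A = trace A / 2"

definition sh_b :: "real^'n^'n \<Rightarrow> real" where
  "sh_b A = (trace A)^2 / 8 - trace (A ** A) / 4"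

lemma sh_a_eq:
  assumes "skew_hamiltonian A"
  shows "sh_a A = A $ 0 $ 0 + A $ 1 $ 1 + A $ 2 $ 2"
  by (simp add: sh_a_def trace_def sum_UNIV_6 skew_hamiltonian_nth[OF assms])

lemma sh_b_eq:
  assumes "skew_hamiltonian A"
  shows "sh_b A = A $ 0 $ 0 * A $ 1 $ 1 + A $ 0 $ 0 * A $ 2 $ 2 + A $ 1 $ 1 * A $ 2 $ 2
    - A $ 0 $ 1 * A $ 1 $ 0 - A $ 0 $ 2 * A $ 2 $ 0 - A $ 1 $ 2 * A $ 2 $ 1
    + A $ 0 $ 4 * A $ 3 $ 1 + A $ 0 $ 5 * A $ 3 $ 2 + A $ 1 $ 5 * A $ 4 $ 2"
  by (simp add: sh_b_def trace_def sum_UNIV_6 skew_hamiltonian_nth[OF assms] matrix_matrix_mult_def;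
      simp add: field_simps power2_eq_square)

text \<open>The constant term is left implicit: \<open>A\<^sup>3 - aA\<^sup>2 + bA\<close> is checked to be scalar.\<close>
lemma skew_hamiltonian_cubic:
  assumes "skew_hamiltonian A"
  obtains c where "A ** A ** A = sh_a A *\<^sub>R (A ** A) - sh_b A *\<^sub>R A + c *\<^sub>R mat 1"
proof
  define M where "M = A ** A ** A - sh_a A *\<^sub>R (A ** A) + sh_b A *\<^sub>R A"
  have "M = M $ 0 $ 0 *\<^sub>R mat 1"
    unfolding M_def vec_eq_iff all_6 sh_a_eq[OF assms] sh_b_eq[OF assms]
    by (intro conjI; simp add: mat_def;
        simp add: sum_UNIV_6 skew_hamiltonian_nth[OF assms] matrix_matrix_mult_def algebra_simps)
  then show "A ** A ** A = sh_a A *\<^sub>R (A ** A) - sh_b A *\<^sub>R A + M $ 0 $ 0 *\<^sub>R mat 1"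
    unfolding M_def by (simp add: algebra_simps)
qed

lemma charpoly_eval_eq_0_eigenvector:
  assumes "charpoly_eval A l = 0"
  obtains y where "y \<noteq> 0" "map_matrix of_real A *v y = l *s y"
proof -
  let ?M = "(\<chi> i j. (if i = j then l else 0) - complex_of_real (A $ i $ j)) :: complex^6^6"
  have "\<not> invertible ?M"
    using assms by (simp add: charpoly_eval_def invertible_det_nz)
  then obtain y where y: "?M *v y = 0" "y \<noteq> 0"
    using matrix_left_invertible_ker invertible_left_inverse by blast
  have "(?M *v y) $ i = l * y $ i - (map_matrix of_real A *v y) $ i" for i
    by (simp add: matrix_vector_mult_def left_diff_distrib sum_subtractf if_distrib[of "\<lambda>x. x * _"]
        cong: if_cong)
  then have "map_matrix of_real A *v y = l *s y"
    using y(1) by (simp add: vec_eq_iff)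
  with y(2) show thesis
    using that by blast
qed

lemma cubic_eigenvalue:
  fixes A :: "real^'n^'n" and y :: "complex^'n"
  assumes "A ** A ** A = a *\<^sub>R (A ** A) - b *\<^sub>R A + c *\<^sub>R mat 1"
    and "y \<noteq> 0" and eigen: "map_matrix of_real A *v y = l *s y"
  shows "l^3 - of_real a * l^2 + of_real b * l - of_real c = 0"
proof -
  have sq: "map_matrix of_real (A ** A) *v y = l^2 *s y"
    by (simp add: map_matrix_of_real_mult eigen of_real_matrix_vector_mult_smult
        flip: matrix_vector_mul_assoc) (simp add: power2_eq_square)
  have "l^3 *s y = map_matrix of_real (A ** A ** A) *v y"
    by (simp add: map_matrix_of_real_mult sq eigen of_real_matrix_vector_mult_smult
        flip: matrix_vector_mul_assoc) (simp add: power3_eq_cube power2_eq_square)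
  also have "\<dots> = (of_real a * l^2 - of_real b * l + of_real c) *s y"
    by (simp add: assms(1) of_real_matrix_vector_mult_cubic sq eigen vector_sadd_rdistrib
        vector_sub_rdistrib)
  finally have "(l^3 - of_real a * l^2 + of_real b * l - of_real c) *s y = 0"
    by (simp add: algebra_simps vector_sadd_rdistrib vector_sub_rdistrib)
  with \<open>y \<noteq> 0\<close> show ?thesis
    by (metis vector_mul_eq_0)
qed

text \<open>The discriminant of \<open>t\<^sup>3 - at\<^sup>2 + bt - c\<close>.\<close>
definition cubic_discriminant :: "'a::comm_ring_1 \<Rightarrow> 'a \<Rightarrow> 'a \<Rightarrow> 'a" where
  "cubic_discriminant a b c = a^2 * b^2 - 4 * b^3 - 4 * a^3 * c - 27 * c^2 + 18 * a * b * c"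

lemma cubic_discriminant_roots:
  fixes a b c :: "'a::idom"
  assumes distinct: "l1 \<noteq> l2" "l1 \<noteq> l3" "l2 \<noteq> l3"
    and roots: "\<And>l. l \<in> {l1, l2, l3} \<Longrightarrow> l^3 - a * l^2 + b * l - c = 0"
  shows "cubic_discriminant a b c = ((l1 - l2) * (l1 - l3) * (l2 - l3))^2"
proof -
  have quadratic: "l^2 + l * l' + l'^2 - a * (l + l') + b = 0"
    if "l \<in> {l1, l2, l3}" "l' \<in> {l1, l2, l3}" "l \<noteq> l'" for l l'
  proof -
    have "(l - l') * (l^2 + l * l' + l'^2 - a * (l + l') + b)
        = (l^3 - a * l^2 + b * l - c) - (l'^3 - a * l'^2 + b * l' - c)"
      by (simp add: algebra_simps power2_eq_square power3_eq_cube)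
    then show ?thesis
      using roots[OF that(1)] roots[OF that(2)] that(3) by simp
  qed
  have "(l2 - l3) * (l1 + l2 + l3 - a)
      = (l1^2 + l1 * l2 + l2^2 - a * (l1 + l2) + b) - (l1^2 + l1 * l3 + l3^2 - a * (l1 + l3) + b)"
    by (simp add: algebra_simps power2_eq_square)
  then have a: "a = l1 + l2 + l3"
    using quadratic[of l1 l2] quadratic[of l1 l3] distinct by simp
  have b: "b = l1 * l2 + l1 * l3 + l2 * l3"
    using quadratic[of l1 l2] distinct unfolding a by (simp add: algebra_simps power2_eq_square)
  have c: "c = l1 * l2 * l3"
    using roots[of l1] unfolding a b by (simp add: algebra_simps power2_eq_square power3_eq_cube)
  show ?thesis
    unfolding cubic_discriminant_def a b c by (simp add: algebra_simps power2_eq_square power3_eq_cube)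
qed

lemma generic_sh_cubic_discriminant_neq_0:
  assumes "generic_sh A"
    and cubic: "A ** A ** A = sh_a A *\<^sub>R (A ** A) - sh_b A *\<^sub>R A + c *\<^sub>R mat 1"
  shows "cubic_discriminant (sh_a A) (sh_b A) c \<noteq> 0"
proof -
  obtain l1 l2 l3 where distinct: "l1 \<noteq> l2" "l1 \<noteq> l3" "l2 \<noteq> l3"
    and charpoly: "\<And>t. charpoly_eval A t = ((t - l1) * (t - l2) * (t - l3))^2"
    using assms(1) unfolding generic_sh_def by blast
  have "l^3 - of_real (sh_a A) * l^2 + of_real (sh_b A) * l - of_real c = 0" if "l \<in> {l1, l2, l3}" for l
  proof -
    have "charpoly_eval A l = 0"
      using that by (auto simp: charpoly)
    then obtain y where "y \<noteq> 0" "map_matrix of_real A *v y = l *s y"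
      by (rule charpoly_eval_eq_0_eigenvector)
    with cubic show ?thesis
      by (rule cubic_eigenvalue)
  qed
  from cubic_discriminant_roots[OF distinct this]
  have "of_real (cubic_discriminant (sh_a A) (sh_b A) c) = ((l1 - l2) * (l1 - l3) * (l2 - l3))^2"
    by (simp add: cubic_discriminant_def)
  with distinct show ?thesis
    by (metis (no_types, lifting) diff_eq_eq mult_eq_0_iff of_real_0 power_eq_0_iff right_minus_eq)
qed

definition poly2_mat :: "real^'n^'n \<Rightarrow> real \<Rightarrow> real \<Rightarrow> real \<Rightarrow> real^'n^'n" where
  "poly2_mat A \<alpha> \<beta> \<gamma> = \<alpha> *\<^sub>R mat 1 + \<beta> *\<^sub>R A + \<gamma> *\<^sub>R (A ** A)"

lemma poly2_mat_mult_vector: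
  "poly2_mat A \<alpha> \<beta> \<gamma> *v v = \<alpha> *\<^sub>R v + \<beta> *\<^sub>R (A *v v) + \<gamma> *\<^sub>R (A *v (A *v v))"
  unfolding poly2_mat_def matrix_vector_mult_add_rdistrib
  by (simp add: matrix_vector_mul_assoc flip: scaleR_matrix_vector_assoc)

lemma poly2_mat_commute:
  "poly2_mat A \<alpha> \<beta> \<gamma> *v (poly2_mat A \<alpha>' \<beta>' \<gamma>' *v v)
    = poly2_mat A \<alpha>' \<beta>' \<gamma>' *v (poly2_mat A \<alpha> \<beta> \<gamma> *v v)"
  by (simp add: poly2_mat_mult_vector matrix_vector_right_distrib matrix_vector_mult_scaleR
      scaleR_add_right scaleR_scaleR mult.commute add_ac)

text \<open>Bezout identity for the resultant of the cubic and \<open>N(t) = 3t\<^sup>2 - 2at + 4b - a\<^sup>2\<close>,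
  written for the sequence \<open>x\<^sub>k = (A\<^sup>k v)\<^sub>i\<close>. At each root \<open>\<lambda>\<^sub>i\<close> of the cubic,
  \<open>N(\<lambda>\<^sub>i) = -(\<lambda>\<^sub>j - \<lambda>\<^sub>k)\<^sup>2\<close>, so the resultant is the discriminant.\<close>
lemma cubic_resultant:
  fixes a b c x0 x1 x2 x3 x4 :: "'a::comm_ring_1"
  assumes N: "3 * x2 - 2 * a * x1 + (4 * b - a^2) * x0 = 0"
    "3 * x3 - 2 * a * x2 + (4 * b - a^2) * x1 = 0"
    "3 * x4 - 2 * a * x3 + (4 * b - a^2) * x2 = 0"
    and cubic: "x3 = a * x2 - b * x1 + c * x0" "x4 = a * x3 - b * x2 + c * x1"
  shows "cubic_discriminant a b c * x0 = 0"
proof -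
  have "cubic_discriminant a b c * x0 =
      (3 * a * c - b^2) * (3 * x2 - 2 * a * x1 + (4 * b - a^2) * x0)
      + (a * b - 9 * c) * (3 * x3 - 2 * a * x2 + (4 * b - a^2) * x1)
      + (3 * b - a^2) * (3 * x4 - 2 * a * x3 + (4 * b - a^2) * x2)"
    unfolding cubic cubic_discriminant_def
    by (simp add: algebra_simps power2_eq_square power3_eq_cube)
  then show ?thesis
    using N by simp
qed

lemma poly2_mat_kernel_trivial:
  assumes cubic: "A ** A ** A = a *\<^sub>R (A ** A) - b *\<^sub>R A + c *\<^sub>R mat 1"
    and disc: "cubic_discriminant a b c \<noteq> 0"
    and N: "poly2_mat A (4 * b - a^2) (- 2 * a) 3 *v v = 0"
  shows "v = 0"
proof -
  let ?N = "poly2_mat A (4 * b - a^2) (- 2 * a) 3"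
  have A: "A *v x = poly2_mat A 0 1 0 *v x" for x
    by (simp add: poly2_mat_mult_vector)
  have N1: "?N *v (A *v v) = 0"
    unfolding A[of v] poly2_mat_commute[of A _ _ _ 0] by (simp only: N matrix_vector_mult_0_right)
  have N2: "?N *v (A *v (A *v v)) = 0"
    unfolding A[of "A *v v"] poly2_mat_commute[of A _ _ _ 0] by (simp only: N1 matrix_vector_mult_0_right)
  have cube: "A *v (A *v (A *v x)) = a *\<^sub>R (A *v (A *v x)) - b *\<^sub>R (A *v x) + c *\<^sub>R x" for x
    using arg_cong[OF cubic, of "\<lambda>M. M *v x"]
    by (simp add: matrix_vector_mult_add_rdistrib matrix_vector_mult_diff_rdistrib
        flip: scaleR_matrix_vector_assoc matrix_vector_mul_assoc)
  have "cubic_discriminant a b c * v $ i = 0" for i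
  proof (rule cubic_resultant)
    show "3 * (A *v (A *v v)) $ i - 2 * a * (A *v v) $ i + (4 * b - a^2) * v $ i = 0"
      using arg_cong[OF N, of "\<lambda>y. y $ i"] by (simp add: poly2_mat_mult_vector algebra_simps)
    show "3 * (A *v (A *v (A *v v))) $ i - 2 * a * (A *v (A *v v)) $ i + (4 * b - a^2) * (A *v v) $ i = 0"
      using arg_cong[OF N1, of "\<lambda>y. y $ i"] by (simp add: poly2_mat_mult_vector algebra_simps)
    show "3 * (A *v (A *v (A *v (A *v v)))) $ i - 2 * a * (A *v (A *v (A *v v))) $ i
        + (4 * b - a^2) * (A *v (A *v v)) $ i = 0"
      using arg_cong[OF N2, of "\<lambda>y. y $ i"] by (simp add: poly2_mat_mult_vector algebra_simps)
    show "(A *v (A *v (A *v v))) $ i = a * (A *v (A *v v)) $ i - b * (A *v v) $ i + c * v $ i"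
      by (simp add: cube)
    show "(A *v (A *v (A *v (A *v v)))) $ i = a * (A *v (A *v (A *v v))) $ i - b * (A *v (A *v v)) $ i
        + c * (A *v v) $ i"
      unfolding cube[of "A *v v"] by simp
  qed
  with disc show ?thesis
    by (simp add: vec_eq_iff)
qed

definition C1 :: "real^'n^'n \<Rightarrow> real^'n^'n" where
  "C1 A = A - sh_a A *\<^sub>R mat 1"

definition C2 :: "real^'n^'n \<Rightarrow> real^'n^'n" where
  "C2 A = A ** A - sh_a A *\<^sub>R A + sh_b A *\<^sub>R mat 1"

lemma C1_eq_poly2_mat: "C1 A = poly2_mat A (- sh_a A) 1 0"
  by (simp add: C1_def poly2_mat_def)

lemma C2_eq_poly2_mat: "C2 A = poly2_mat A (sh_b A) (- sh_a A) 1"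
  by (simp add: C2_def poly2_mat_def)

section \<open>The Jacobi form\<close>

text \<open>For skew-symmetric \<open>P\<close>, this is the 3-form \<open>u \<and> P\<close>.\<close>
definition wedge :: "real^'n \<Rightarrow> real^'n^'n \<Rightarrow> 'n \<Rightarrow> 'n \<Rightarrow> 'n \<Rightarrow> real" where
  "wedge u P i j k = u $ i * P $ j $ k + u $ j * P $ k $ i + u $ k * P $ i $ j"

lemma wedge_swap:
  assumes "transpose P = - P"
  shows "wedge u P i k j = - wedge u P i j k"
proof -
  have skew: "P $ b $ a = - P $ a $ b" for a b
    using arg_cong[OF assms, of "\<lambda>M. M $ a $ b"] by (simp add: transpose_def)
  show ?thesis
    unfolding wedge_def skew[of j k] skew[of i j] skew[of k i] by (simp add: algebra_simps)
qed

lemma wedge_contract: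
  fixes P M :: "real^'n^'n"
  assumes skewP: "transpose P = - P" and skewM: "transpose M = - M"
  shows "(\<Sum>j\<in>UNIV. \<Sum>k\<in>UNIV. wedge u P i j k * M $ j $ k) = inner P M * u $ i + 2 * ((P ** M) *v u) $ i"
proof -
  have P: "P $ b $ a = - P $ a $ b" and M: "M $ b $ a = - M $ a $ b" for a b
    using arg_cong[OF skewP, of "\<lambda>X. X $ a $ b"] arg_cong[OF skewM, of "\<lambda>X. X $ a $ b"]
    by (simp_all add: transpose_def)
  have "(\<Sum>j\<in>UNIV. \<Sum>k\<in>UNIV. wedge u P i j k * M $ j $ k)
      = (\<Sum>j\<in>UNIV. \<Sum>k\<in>UNIV. u $ i * P $ j $ k * M $ j $ k)
        + (\<Sum>j\<in>UNIV. \<Sum>k\<in>UNIV. u $ j * P $ k $ i * M $ j $ k)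
        + (\<Sum>j\<in>UNIV. \<Sum>k\<in>UNIV. u $ k * P $ i $ j * M $ j $ k)"
    by (simp add: wedge_def distrib_right sum.distrib)
  also have "(\<Sum>j\<in>UNIV. \<Sum>k\<in>UNIV. u $ i * P $ j $ k * M $ j $ k) = inner P M * u $ i"
    by (simp add: inner_vec_def sum_distrib_left mult_ac)
  also have "(\<Sum>j\<in>UNIV. \<Sum>k\<in>UNIV. u $ j * P $ k $ i * M $ j $ k) = ((P ** M) *v u) $ i"
  proof -
    have summand: "u $ j * P $ k $ i * M $ j $ k = P $ i $ k * M $ k $ j * u $ j" for j k
      using P[of i k] M[of k j] by simp
    show ?thesis
      by (simp only: summand) (simp add: matrix_vector_mult_def matrix_matrix_mult_def sum_distrib_right)
  qed
  also have "(\<Sum>j\<in>UNIV. \<Sum>k\<in>UNIV. u $ k * P $ i $ j * M $ j $ k) = ((P ** M) *v u) $ i"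
    by (subst sum.swap) (simp add: matrix_vector_mult_def matrix_matrix_mult_def sum_distrib_left mult_ac)
  finally show ?thesis
    by simp
qed

definition jacobi_form :: "real^6^6 \<Rightarrow> real^6 \<Rightarrow> real^6 \<Rightarrow> real^6 \<Rightarrow> 6 \<Rightarrow> 6 \<Rightarrow> 6 \<Rightarrow> real" where
  "jacobi_form A u v w i j k = wedge (Jmat *v u) Jmat i j k + wedge (Jmat *v v) (Jmat ** A) i j k
     + wedge (Jmat *v w) (Jmat ** A ** A) i j k"

lemma jacobi_form_cycle: "jacobi_form A u v w i j k = jacobi_form A u v w j k i"
  by (simp add: jacobi_form_def wedge_def)

lemma jacobi_form_swap:
  assumes "skew_hamiltonian A"
  shows "jacobi_form A u v w i k j = - jacobi_form A u v w i j k"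
  using wedge_swap[OF transpose_Jmat, of _ i k j]
    wedge_swap[OF assms[unfolded skew_hamiltonian_iff_skew], of _ i k j]
    wedge_swap[OF skew_hamiltonian_skew_square[OF assms], of _ i k j]
  by (simp add: jacobi_form_def)

lemma jacobi_form_add:
  "jacobi_form A (u + u') (v + v') (w + w') i j k = jacobi_form A u v w i j k + jacobi_form A u' v' w' i j k"
  by (simp add: jacobi_form_def wedge_def matrix_vector_right_distrib algebra_simps)

lemma jacobi_form_diff_scaleR:
  "jacobi_form A (u - e *\<^sub>R u') (v - e *\<^sub>R v') (w - e *\<^sub>R w') i j k
    = jacobi_form A u v w i j k - e * jacobi_form A u' v' w' i j k"
  by (simp add: jacobi_form_def wedge_def algebra_simps)

text \<open>The form is alternating, so the identity is needed only on the 20 increasing triples,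
  where it is a polynomial identity in the entries of \<open>w\<close> and the 15 free entries of \<open>A\<close>.\<close>
lemma jacobi_form_C2_C1:
  assumes "skew_hamiltonian A"
  shows "jacobi_form A (C2 A *v w) (C1 A *v w) w i j k = 0"
proof (rule alternating_eq_0[where f = "jacobi_form A (C2 A *v w) (C1 A *v w) w"])
  have "\<forall>i j k. i < j \<longrightarrow> j < k \<longrightarrow> jacobi_form A (C2 A *v w) (C1 A *v w) w i j k = 0"
    unfolding all_increasing_6
    by (intro conjI; simp add: jacobi_form_def wedge_def C1_eq_poly2_mat C2_eq_poly2_mat poly2_mat_mult_vector
          sh_a_eq[OF assms] sh_b_eq[OF assms] matrix_vector_mult_scaleR matrix_vector_right_distrib
          matrix_vector_mult_diff_distrib Jmat_mult_vector_nth Jmat_mult_nth Jmat_nth flip: matrix_mul_assoc;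
        simp add: sum_UNIV_6 skew_hamiltonian_nth[OF assms] matrix_matrix_mult_def matrix_vector_mult_def
          algebra_simps)
  then show "jacobi_form A (C2 A *v w) (C1 A *v w) w i j k = 0" if "i < j" "j < k" for i j k
    using that by blast
qed (rule jacobi_form_cycle, rule jacobi_form_swap[OF assms])

lemma jacobi_form_contract:
  assumes "skew_hamiltonian A" and "transpose M = - M"
  shows "(\<Sum>j\<in>UNIV. \<Sum>k\<in>UNIV. jacobi_form A u v 0 i j k * M $ j $ k)
    = inner Jmat M * (Jmat *v u) $ i + 2 * ((Jmat ** M) *v (Jmat *v u)) $ i
      + inner (Jmat ** A) M * (Jmat *v v) $ i + 2 * ((Jmat ** A ** M) *v (Jmat *v v)) $ i"
proof -
  have "(\<Sum>j\<in>UNIV. \<Sum>k\<in>UNIV. jacobi_form A u v 0 i j k * M $ j $ k)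
      = (\<Sum>j\<in>UNIV. \<Sum>k\<in>UNIV. wedge (Jmat *v u) Jmat i j k * M $ j $ k)
        + (\<Sum>j\<in>UNIV. \<Sum>k\<in>UNIV. wedge (Jmat *v v) (Jmat ** A) i j k * M $ j $ k)"
    by (simp add: jacobi_form_def wedge_def[of 0] distrib_right sum.distrib)
  then show ?thesis
    using assms by (simp add: wedge_contract transpose_Jmat skew_hamiltonian_iff_skew matrix_mul_assoc)
qed

lemma jacobi_form_contract_Jmat:
  assumes "skew_hamiltonian A"
  shows "(\<Sum>j\<in>UNIV. \<Sum>k\<in>UNIV. jacobi_form A u v 0 i j k * Jmat $ j $ k)
    = 2 * (Jmat *v (2 *\<^sub>R u + sh_a A *\<^sub>R v - A *v v)) $ i"
proof -
  have "inner Jmat Jmat = 6"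
    by (simp add: inner_vec_def sum_UNIV_6 Jmat_nth)
  moreover have "inner (Jmat ** A) Jmat = 2 * sh_a A"
    by (simp add: inner_vec_def sum_UNIV_6 Jmat_nth Jmat_mult_nth sh_a_eq[OF assms]
        skew_hamiltonian_nth[OF assms])
  moreover have "(Jmat ** Jmat) *v (Jmat *v u) = - (Jmat *v u)"
    by (simp add: Jmat_mult_Jmat uminus_matrix_vector_mult)
  moreover have "(Jmat ** A ** Jmat) *v (Jmat *v v) = - (Jmat *v (A *v v))"
    by (simp add: Jmat_mult_Jmat_vector matrix_vector_mult_uminus flip: matrix_vector_mul_assoc)
  ultimately show ?thesis
    unfolding jacobi_form_contract[OF assms transpose_Jmat] by (simp add: algebra_simps)
qed

lemma jacobi_form_contract_mult_Jmat:
  assumes "skew_hamiltonian A"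
  shows "(\<Sum>j\<in>UNIV. \<Sum>k\<in>UNIV. jacobi_form A u v 0 i j k * (A ** Jmat) $ j $ k)
    = 2 * (Jmat *v (sh_a A *\<^sub>R u - A *v u + ((sh_a A)^2 - 2 * sh_b A) *\<^sub>R v - A *v (A *v v))) $ i"
proof -
  have inner1: "inner Jmat (A ** Jmat) = 2 * sh_a A"
    by (simp add: inner_vec_def sum_UNIV_6 Jmat_nth mult_Jmat_nth sh_a_eq[OF assms]
        skew_hamiltonian_nth[OF assms])
  have inner2: "inner (Jmat ** A) (A ** Jmat) = 2 * (sh_a A)^2 - 4 * sh_b A"
    by (simp add: inner_vec_def sum_UNIV_6 Jmat_mult_nth mult_Jmat_nth sh_a_eq[OF assms] sh_b_eq[OF assms]
        skew_hamiltonian_nth[OF assms]; simp add: algebra_simps power2_eq_square)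
  have vec1: "(Jmat ** (A ** Jmat)) *v (Jmat *v u) = - (Jmat *v (A *v u))"
    by (simp add: Jmat_mult_Jmat_vector matrix_vector_mult_uminus flip: matrix_vector_mul_assoc)
  have vec2: "(Jmat ** A ** (A ** Jmat)) *v (Jmat *v v) = - (Jmat *v (A *v (A *v v)))"
    by (simp add: Jmat_mult_Jmat_vector matrix_vector_mult_uminus flip: matrix_vector_mul_assoc)
  show ?thesis
    unfolding jacobi_form_contract[OF assms skew_hamiltonian_skew_mult_Jmat[OF assms]]
      inner1 inner2 vec1 vec2
    by (simp add: algebra_simps)
qed

lemma jacobi_form_eq_0_imp:
  assumes sh: "skew_hamiltonian A"
    and cubic: "A ** A ** A = sh_a A *\<^sub>R (A ** A) - sh_b A *\<^sub>R A + c *\<^sub>R mat 1"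
    and disc: "cubic_discriminant (sh_a A) (sh_b A) c \<noteq> 0"
    and jacobi: "\<And>i j k. jacobi_form A u v 0 i j k = 0"
  shows "u = 0" and "v = 0"
proof -
  define a b where "a = sh_a A" and "b = sh_b A"
  have J_eq_0: "X = 0" if "\<And>i. 0 = 2 * (Jmat *v X) $ i" for X :: "real^6"
    using that Jmat_mult_vector_eq_0_iff[of X] by (simp add: vec_eq_iff)
  have E0: "2 *\<^sub>R u + a *\<^sub>R v - A *v v = 0"
    using jacobi_form_contract_Jmat[OF sh, of u v] unfolding a_def jacobi by (intro J_eq_0) simp
  have E1: "a *\<^sub>R u - A *v u + (a^2 - 2 * b) *\<^sub>R v - A *v (A *v v) = 0"
    using jacobi_form_contract_mult_Jmat[OF sh, of u v] unfolding a_def b_def jacobi by (intro J_eq_0) simp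
  have "(poly2_mat A (4 * b - a^2) (- 2 * a) 3 *v v) $ i
      = a * (2 *\<^sub>R u + a *\<^sub>R v - A *v v) $ i - (A *v (2 *\<^sub>R u + a *\<^sub>R v - A *v v)) $ i
        - 2 * (a *\<^sub>R u - A *v u + (a^2 - 2 * b) *\<^sub>R v - A *v (A *v v)) $ i" for i
    by (simp add: poly2_mat_mult_vector algebra_simps power2_eq_square)
  then have "poly2_mat A (4 * b - a^2) (- 2 * a) 3 *v v = 0"
    by (simp add: E0 E1 vec_eq_iff)
  with cubic disc show "v = 0"
    unfolding a_def b_def by (rule poly2_mat_kernel_trivial)
  with E0 show "u = 0"
    by simp
qed

section \<open>The Jacobiator of \<open>\<Pi>\<^sub>\<epsilon>\<close>\<close>

definition jacobiator :: "(real^'n \<Rightarrow> real^'n^'n) \<Rightarrow> real^'n \<Rightarrow> 'n \<Rightarrow> 'n \<Rightarrow> 'n \<Rightarrow> real" where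
  "jacobiator P x i j k = coord_bracket P i j k x + coord_bracket P j k i x + coord_bracket P k i j x"

lemma pdiff_affine:
  fixes f g h :: "real^'n \<Rightarrow> real"
  assumes "f differentiable at x" "g differentiable at x" "h differentiable at x"
  shows "pdiff (\<lambda>y. d + c * (f y * \<beta>\<^sub>1 + g y * \<beta>\<^sub>2 + h y * \<beta>\<^sub>3)) l x
    = c * (pdiff f l x * \<beta>\<^sub>1 + pdiff g l x * \<beta>\<^sub>2 + pdiff h l x * \<beta>\<^sub>3)"
proof -
  have "((\<lambda>y. d + c * (f y * \<beta>\<^sub>1 + g y * \<beta>\<^sub>2 + h y * \<beta>\<^sub>3)) has_derivative
      (\<lambda>v. c * (frechet_derivative f (at x) v * \<beta>\<^sub>1 + frechet_derivative g (at x) v * \<beta>\<^sub>2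
        + frechet_derivative h (at x) v * \<beta>\<^sub>3))) (at x)"
    using assms[THEN frechet_derivative_works[THEN iffD1]]
    by (auto intro!: derivative_eq_intros)
  then show ?thesis
    unfolding pdiff_def by (simp add: frechet_derivative_at[symmetric])
qed

lemma jacobiator_affine:
  fixes f g h :: "real^'n \<Rightarrow> real"
  assumes P: "\<And>y. P y = P\<^sub>0 + c *\<^sub>R (f y *\<^sub>R P\<^sub>1 + g y *\<^sub>R P\<^sub>2 + h y *\<^sub>R P\<^sub>3)"
    and diff: "f differentiable at x" "g differentiable at x" "h differentiable at x"
  shows "jacobiator P x i j k = c * (wedge (P x *v grad f x) P\<^sub>1 i j k
    + wedge (P x *v grad g x) P\<^sub>2 i j k + wedge (P x *v grad h x) P\<^sub>3 i j k)"
proof -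
  have bracket: "coord_bracket P a b d x = c * ((P x *v grad f x) $ a * P\<^sub>1 $ b $ d
      + (P x *v grad g x) $ a * P\<^sub>2 $ b $ d + (P x *v grad h x) $ a * P\<^sub>3 $ b $ d)" for a b d
  proof -
    have entry: "(\<lambda>y. P y $ b $ d)
        = (\<lambda>y. P\<^sub>0 $ b $ d + c * (f y * P\<^sub>1 $ b $ d + g y * P\<^sub>2 $ b $ d + h y * P\<^sub>3 $ b $ d))"
      by (simp add: P)
    show ?thesis
      unfolding coord_bracket_def entry pdiff_affine[OF diff]
      by (simp add: matrix_vector_mult_def grad_def sum_distrib_left sum_distrib_right sum.distrib
          algebra_simps)
  qed
  show ?thesis
    by (simp add: jacobiator_def bracket wedge_def algebra_simps)
qed

lemma smooth_imp_differentiable: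
  assumes "smooth f"
  shows "f differentiable at x"
  using assms[unfolded smooth_def, THEN spec[of _ "[]"]] by (simp add: differentiable_on_def)

lemma Pi_eps_eq_Jmat_mult:
  assumes "skew_hamiltonian A"
  shows "Pi_eps A p q r \<epsilon> x
    = Jmat + (- \<epsilon>\<^sup>2) *\<^sub>R (p x *\<^sub>R Jmat + q x *\<^sub>R (Jmat ** A) + r x *\<^sub>R (Jmat ** A ** A))"
  using assms by (simp add: Pi_eps_def skew_hamiltonian_def skew_hamiltonian_transpose_square algebra_simps)

lemma Pi_eps_skew:
  assumes "skew_hamiltonian A"
  shows "transpose (Pi_eps A p q r \<epsilon> x) = - Pi_eps A p q r \<epsilon> x"
proof -
  have "transpose (Jmat ** A) = - (Jmat ** A)" "transpose (Jmat ** A ** A) = - (Jmat ** A ** A)"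
    using assms by (simp_all add: skew_hamiltonian_iff_skew skew_hamiltonian_skew_square)
  then show ?thesis
    by (simp only: Pi_eps_eq_Jmat_mult[OF assms] transpose_add transpose_scalar transpose_Jmat)
      (simp add: algebra_simps)
qed

lemma Pi_eps_mult_vector:
  assumes "skew_hamiltonian A"
  shows "Pi_eps A p q r \<epsilon> x *v v = Jmat *v (v - \<epsilon>\<^sup>2 *\<^sub>R (poly2_mat A (p x) (q x) (r x) *v v))"
  using assms by (simp add: Pi_eps_eq_Jmat_mult poly2_mat_mult_vector algebra_simps
      flip: scaleR_matrix_vector_assoc matrix_vector_mul_assoc)

lemma jacobiator_Pi_eps:
  fixes x :: "real^6"
  assumes "skew_hamiltonian A" and "smooth p" "smooth q" "smooth r"
  defines "Q \<equiv> poly2_mat A (p x) (q x) (r x)"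
  shows "jacobiator (Pi_eps A p q r \<epsilon>) x i j k = - \<epsilon>\<^sup>2 * jacobi_form A
    (grad p x - \<epsilon>\<^sup>2 *\<^sub>R (Q *v grad p x)) (grad q x - \<epsilon>\<^sup>2 *\<^sub>R (Q *v grad q x))
    (grad r x - \<epsilon>\<^sup>2 *\<^sub>R (Q *v grad r x)) i j k"
  using assms(2-4)[THEN smooth_imp_differentiable]
  by (simp add: jacobiator_affine[OF Pi_eps_eq_Jmat_mult[OF assms(1)]] Pi_eps_mult_vector[OF assms(1)]
      jacobi_form_def Q_def)

lemma poisson_tensor_Pi_eps_if_gradients:
  assumes sh: "skew_hamiltonian A" and smooth: "smooth p" "smooth q" "smooth r"
    and grad_q: "\<And>x. grad q x = C1 A *v grad r x" and grad_p: "\<And>x. grad p x = C2 A *v grad r x"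
  shows "poisson_tensor (Pi_eps A p q r \<epsilon>)"
  unfolding poisson_tensor_def
proof (intro conjI allI)
  fix x i j k
  define Q where "Q = poly2_mat A (p x) (q x) (r x)"
  define w where "w = grad r x - \<epsilon>\<^sup>2 *\<^sub>R (Q *v grad r x)"
  have "grad q x - \<epsilon>\<^sup>2 *\<^sub>R (Q *v grad q x) = C1 A *v w"
    unfolding grad_q w_def C1_eq_poly2_mat Q_def
    by (simp add: poly2_mat_commute matrix_vector_mult_diff_distrib matrix_vector_mult_scaleR)
  moreover have "grad p x - \<epsilon>\<^sup>2 *\<^sub>R (Q *v grad p x) = C2 A *v w"
    unfolding grad_p w_def C2_eq_poly2_mat Q_def
    by (simp add: poly2_mat_commute matrix_vector_mult_diff_distrib matrix_vector_mult_scaleR)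
  ultimately have "jacobiator (Pi_eps A p q r \<epsilon>) x i j k
      = - \<epsilon>\<^sup>2 * jacobi_form A (C2 A *v w) (C1 A *v w) w i j k"
    unfolding jacobiator_Pi_eps[OF sh smooth] Q_def w_def by simp
  then show "coord_bracket (Pi_eps A p q r \<epsilon>) i j k x + coord_bracket (Pi_eps A p q r \<epsilon>) j k i x
      + coord_bracket (Pi_eps A p q r \<epsilon>) k i j x = 0"
    by (simp add: jacobiator_def jacobi_form_C2_C1[OF sh])
qed (rule Pi_eps_skew[OF sh])

lemma gradients_if_poisson_tensor_Pi_eps:
  assumes sh: "skew_hamiltonian A" and "generic_sh A" and smooth: "smooth p" "smooth q" "smooth r"
    and poisson: "\<And>\<epsilon>. poisson_tensor (Pi_eps A p q r \<epsilon>)"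
  shows "grad q x = C1 A *v grad r x \<and> grad p x = C2 A *v grad r x"
proof -
  obtain c where cubic: "A ** A ** A = sh_a A *\<^sub>R (A ** A) - sh_b A *\<^sub>R A + c *\<^sub>R mat 1"
    using skew_hamiltonian_cubic[OF sh] .
  define Q where "Q = poly2_mat A (p x) (q x) (r x)"
  define u v where "u = grad p x - C2 A *v grad r x" and "v = grad q x - C1 A *v grad r x"
  have "jacobi_form A u v 0 i j k = 0" for i j k
  proof -
    let ?F0 = "jacobi_form A (grad p x) (grad q x) (grad r x) i j k"
    let ?F1 = "jacobi_form A (Q *v grad p x) (Q *v grad q x) (Q *v grad r x) i j k"
    have "- \<epsilon>\<^sup>2 * (?F0 - \<epsilon>\<^sup>2 * ?F1) = 0" for \<epsilon>
    proof -
      have "jacobiator (Pi_eps A p q r \<epsilon>) x i j k = 0"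
        using poisson[of \<epsilon>] by (simp add: poisson_tensor_def jacobiator_def)
      then show ?thesis
        unfolding jacobiator_Pi_eps[OF sh smooth] jacobi_form_diff_scaleR Q_def .
    qed
    \<comment> \<open>two values of \<open>\<epsilon>\<^sup>2\<close> separate the two coefficients\<close>
    from this[of 1] this[of "sqrt 2"] have "?F0 = 0"
      by simp
    moreover have "?F0 = jacobi_form A u v 0 i j k
        + jacobi_form A (C2 A *v grad r x) (C1 A *v grad r x) (grad r x) i j k"
      unfolding u_def v_def by (simp flip: jacobi_form_add)
    ultimately show ?thesis
      by (simp add: jacobi_form_C2_C1[OF sh])
  qed
  with sh cubic generic_sh_cubic_discriminant_neq_0[OF assms(2) cubic]
  have "u = 0" "v = 0"
    by (auto intro: jacobi_form_eq_0_imp)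
  then show ?thesis
    by (simp add: u_def v_def)
qed

theorem mainTheorem13:
  fixes A :: "real^6^6" and p q r :: "real^6 \<Rightarrow> real"
  assumes "skew_hamiltonian A" and "generic_sh A"
    and "smooth p" and "smooth q" and "smooth r"
  shows "(\<forall>\<epsilon>. poisson_tensor (Pi_eps A p q r \<epsilon>)) \<longleftrightarrow>
    (let a = trace A / 2;
         b = (trace A)^2 / 8 - trace (A ** A) / 4;
         C1 = A - a *\<^sub>R mat 1;
         C2 = A ** A - a *\<^sub>R A + b *\<^sub>R mat 1
     in \<forall>x. grad q x = C1 *v grad r x \<and> grad p x = C2 *v grad r x)"
  unfolding Let_def sh_a_def[symmetric] sh_b_def[symmetric] C1_def[symmetric] C2_def[symmetric]
  using gradients_if_poisson_tensor_Pi_eps[OF assms] poisson_tensor_Pi_eps_if_gradients[OF assms(1,3-5)]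
  by blast

end
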